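(* Let $S$ be a regular semigroup. The following are equivalent: (1) $I^{2}=I$ for every interior ideal $I$ of $S$; (2) $I_1\cap I_2=I_1I_2\cap I_2I_1$ for all interior ideals $I_1,I_2$ of $S$; (3) every interior ideal of $S$ is semiprime; (4) every proper interior ideal of $S$ is the intersection of the irreducible semiprime interior ideals of $S$ which contain it.
   Context: A semigroup $S$ is regular if for every $a\in S$ there is $x\in S$ with $a=axa$. A subsemigroup $I$ of $S$ (non-empty with $II\subseteq I$) is an interior ideal if $SIS\subseteq I$. For subsets $A,B$, $AB=\{ab:a\in A,b\in B\}$ and $A^2=AA$. An interior ideal $I$ is semiprime if for every interior ideal $A$ of $S$, $A^{2}\subseteq I$ implies $A\subseteq I$. It is irreducible if for all interior ideals $I_1,I_2$ of $S$, $I_1\cap I_2=I$ implies $I_1=I$ or $I_2=I$. *)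

theory Defs
  imports Main
begin

text \<open>The semigroup S is the whole type 'a (class semigroup_mult).\<close>

definition setmult :: "'a::semigroup_mult set \<Rightarrow> 'a set \<Rightarrow> 'a set" (infixl "\<cdot>\<^sub>s" 70) where
  "A \<cdot>\<^sub>s B = {a * b | a b. a \<in> A \<and> b \<in> B}"

definition regular_semigroup :: "'a::semigroup_mult itself \<Rightarrow> bool" where
  "regular_semigroup _ \<longleftrightarrow> (\<forall>a::'a. \<exists>x. a = a * x * a)"

definition interior_ideal :: "'a::semigroup_mult set \<Rightarrow> bool" where
  "interior_ideal I \<longleftrightarrow> I \<noteq> {} \<and> I \<cdot>\<^sub>s I \<subseteq> I \<and> UNIV \<cdot>\<^sub>s I \<cdot>\<^sub>s UNIV \<subseteq> I"

definition semiprime_ii :: "'a::semigroup_mult set \<Rightarrow> bool" where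
  "semiprime_ii I \<longleftrightarrow> interior_ideal I \<and>
     (\<forall>A. interior_ideal A \<longrightarrow> A \<cdot>\<^sub>s A \<subseteq> I \<longrightarrow> A \<subseteq> I)"

definition irreducible_ii :: "'a::semigroup_mult set \<Rightarrow> bool" where
  "irreducible_ii I \<longleftrightarrow> interior_ideal I \<and>
     (\<forall>I1 I2. interior_ideal I1 \<longrightarrow> interior_ideal I2 \<longrightarrow> I1 \<inter> I2 = I \<longrightarrow> I1 = I \<or> I2 = I)"

end

theory Submission
  imports Defs
begin

text \<open>In a regular semigroup every interior ideal \<open>I\<close> is a two-sided ideal: writing
  \<open>a = a x a\<close> for \<open>a \<in> I\<close>, we get \<open>s a = s a (x a) \<in> S I S \<subseteq> I\<close> and symmetrically \<open>a s \<in> I\<close>.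
  Consequently \<open>I J = I \<inter> J\<close> for any two interior ideals (for \<open>a \<in> I \<inter> J\<close> use \<open>a = a (x a)\<close>
  with \<open>x a \<in> J\<close>). Hence conditions (1)--(3) all hold, and so does (4): by Zorn's lemma every
  \<open>a \<notin> I\<close> is avoided by an interior ideal containing \<open>I\<close> that is maximal with this property,
  such an ideal is irreducible, and it is semiprime like every interior ideal. All four
  conditions being true, they are equivalent.\<close>

lemma interior_ideal_iff:
  "interior_ideal I \<longleftrightarrow>
     I \<noteq> {} \<and> (\<forall>s\<in>I. \<forall>t\<in>I. s * t \<in> I) \<and> (\<forall>s\<in>I. \<forall>u v. u * s * v \<in> I)"
  unfolding interior_ideal_def setmult_def by blast

lemma interior_ideal_mult_closed: "interior_ideal I \<Longrightarrow> s \<in> I \<Longrightarrow> t \<in> I \<Longrightarrow> s * t \<in> I"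
  unfolding interior_ideal_iff by blast

lemma interior_ideal_sandwich: "interior_ideal I \<Longrightarrow> s \<in> I \<Longrightarrow> u * s * v \<in> I"
  unfolding interior_ideal_iff by blast

lemma interior_ideal_Union_chain:
  assumes "C \<noteq> {}" and ideals: "\<forall>I\<in>C. interior_ideal I"
    and chain: "\<forall>I\<in>C. \<forall>J\<in>C. I \<subseteq> J \<or> J \<subseteq> I"
  shows "interior_ideal (\<Union>C)"
  unfolding interior_ideal_iff
proof (intro conjI ballI allI)
  show "\<Union>C \<noteq> {}"
    using \<open>C \<noteq> {}\<close> ideals by (auto simp: interior_ideal_def)
next
  fix s t assume "s \<in> \<Union>C" "t \<in> \<Union>C"
  then obtain I J where "I \<in> C" "J \<in> C" "s \<in> I" "t \<in> J" by blast
  with chain consider "s \<in> J" | "t \<in> I" by blast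
  then show "s * t \<in> \<Union>C"
    using \<open>I \<in> C\<close> \<open>J \<in> C\<close> \<open>s \<in> I\<close> \<open>t \<in> J\<close> ideals interior_ideal_mult_closed by cases blast+
next
  fix s u v assume "s \<in> \<Union>C"
  then show "u * s * v \<in> \<Union>C"
    using ideals interior_ideal_sandwich by blast
qed

lemma regular_semigroupE:
  assumes "regular_semigroup TYPE('a::semigroup_mult)"
  obtains x where "(a::'a) = a * x * a"
  using assms unfolding regular_semigroup_def by blast

lemma regular_interior_ideal_mult_left:
  assumes "regular_semigroup TYPE('a::semigroup_mult)" and "interior_ideal I" and "(a::'a) \<in> I"
  shows "s * a \<in> I"
proof -
  obtain x where "a = a * x * a" using assms(1) by (rule regular_semigroupE)
  then have "s * a = s * a * (x * a)" by (metis mult.assoc)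
  with assms(2,3) show ?thesis by (metis interior_ideal_sandwich)
qed

lemma regular_interior_ideal_mult_right:
  assumes "regular_semigroup TYPE('a::semigroup_mult)" and "interior_ideal I" and "(a::'a) \<in> I"
  shows "a * s \<in> I"
proof -
  obtain x where "a = a * x * a" using assms(1) by (rule regular_semigroupE)
  then have "a * s = (a * x) * a * s" by simp
  with assms(2,3) show ?thesis by (metis interior_ideal_sandwich)
qed

lemma regular_setmult_interior_ideals:
  assumes reg: "regular_semigroup TYPE('a::semigroup_mult)"
    and "interior_ideal I" and "interior_ideal J"
  shows "I \<cdot>\<^sub>s J = I \<inter> (J::'a set)"
proof
  show "I \<cdot>\<^sub>s J \<subseteq> I \<inter> J"
    unfolding setmult_def
    using regular_interior_ideal_mult_left[OF reg \<open>interior_ideal J\<close>]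
      regular_interior_ideal_mult_right[OF reg \<open>interior_ideal I\<close>] by blast
next
  show "I \<inter> J \<subseteq> I \<cdot>\<^sub>s J"
  proof
    fix a assume a: "a \<in> I \<inter> J"
    obtain x where "a = a * x * a" using reg by (rule regular_semigroupE)
    then have "a = a * (x * a)" by (simp add: mult.assoc)
    moreover have "x * a \<in> J"
      using a regular_interior_ideal_mult_left[OF reg \<open>interior_ideal J\<close>] by blast
    ultimately show "a \<in> I \<cdot>\<^sub>s J"
      using a unfolding setmult_def by blast
  qed
qed

corollary regular_interior_ideal_idempotent:
  "regular_semigroup TYPE('a::semigroup_mult) \<Longrightarrow> interior_ideal (I::'a set) \<Longrightarrow> I \<cdot>\<^sub>s I = I"
  using regular_setmult_interior_ideals by blast

corollary regular_semiprime_ii: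
  "regular_semigroup TYPE('a::semigroup_mult) \<Longrightarrow> interior_ideal (I::'a set) \<Longrightarrow> semiprime_ii I"
  unfolding semiprime_ii_def using regular_interior_ideal_idempotent by blast

lemma irreducible_ii_avoiding:
  assumes "interior_ideal I" and "a \<notin> I"
  obtains J where "irreducible_ii J" and "I \<subseteq> J" and "a \<notin> J"
proof -
  define \<A> where "\<A> = {J. interior_ideal J \<and> I \<subseteq> J \<and> a \<notin> J}"
  have "\<exists>M\<in>\<A>. \<forall>X\<in>\<A>. M \<subseteq> X \<longrightarrow> X = M"
  proof (rule subset_Zorn_nonempty)
    show "\<A> \<noteq> {}" using assms unfolding \<A>_def by blast
  next
    fix C assume "C \<noteq> {}" and "subset.chain \<A> C"
    then have "interior_ideal (\<Union>C)"
      by (intro interior_ideal_Union_chain) (auto simp: subset_chain_def \<A>_def)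
    then show "\<Union>C \<in> \<A>"
      using \<open>C \<noteq> {}\<close> \<open>subset.chain \<A> C\<close> by (auto simp: subset_chain_def \<A>_def)
  qed
  then obtain M where "M \<in> \<A>" and maximal: "\<forall>X\<in>\<A>. M \<subseteq> X \<longrightarrow> X = M" by blast
  then have M: "interior_ideal M" "I \<subseteq> M" "a \<notin> M" unfolding \<A>_def by auto
  have "irreducible_ii M"
    unfolding irreducible_ii_def
  proof (intro conjI allI impI)
    fix I1 I2 assume I12: "interior_ideal I1" "interior_ideal I2" and "I1 \<inter> I2 = M"
    show "I1 = M \<or> I2 = M"
    proof (rule ccontr)
      assume "\<not> (I1 = M \<or> I2 = M)"
      then have "a \<in> I1" and "a \<in> I2"
        using maximal I12 M(2) \<open>I1 \<inter> I2 = M\<close> unfolding \<A>_def by blast+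
      with M(3) \<open>I1 \<inter> I2 = M\<close> show False by blast
    qed
  qed (fact M(1))
  then show thesis using M(2,3) by (rule that)
qed

lemma regular_interior_ideal_eq_Inter_irreducible_semiprime:
  assumes reg: "regular_semigroup TYPE('a::semigroup_mult)" and "interior_ideal (I::'a set)"
  shows "I = \<Inter>{J. irreducible_ii J \<and> semiprime_ii J \<and> I \<subseteq> J}"
proof (intro equalityI subsetI)
  fix a assume a: "a \<in> \<Inter>{J. irreducible_ii J \<and> semiprime_ii J \<and> I \<subseteq> J}"
  show "a \<in> I"
  proof (rule ccontr)
    assume "a \<notin> I"
    with \<open>interior_ideal I\<close> obtain J where J: "irreducible_ii J" "I \<subseteq> J" "a \<notin> J"
      by (rule irreducible_ii_avoiding)
    then have "semiprime_ii J"
      using regular_semiprime_ii[OF reg] unfolding irreducible_ii_def by blast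
    with a J show False by blast
  qed
qed blast

theorem mainTheorem12:
  assumes "regular_semigroup TYPE('a::semigroup_mult)"
  shows "((\<forall>I::'a set. interior_ideal I \<longrightarrow> I \<cdot>\<^sub>s I = I)
          \<longleftrightarrow> (\<forall>I1 I2::'a set. interior_ideal I1 \<longrightarrow> interior_ideal I2 \<longrightarrow>
                 I1 \<inter> I2 = (I1 \<cdot>\<^sub>s I2) \<inter> (I2 \<cdot>\<^sub>s I1)))
       \<and> ((\<forall>I::'a set. interior_ideal I \<longrightarrow> I \<cdot>\<^sub>s I = I)
          \<longleftrightarrow> (\<forall>I::'a set. interior_ideal I \<longrightarrow> semiprime_ii I))
       \<and> ((\<forall>I::'a set. interior_ideal I \<longrightarrow> I \<cdot>\<^sub>s I = I)
          \<longleftrightarrow> (\<forall>I::'a set. interior_ideal I \<longrightarrow> I \<noteq> UNIV \<longrightarrow>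
                 I = \<Inter>{J. irreducible_ii J \<and> semiprime_ii J \<and> I \<subseteq> J}))"
proof -
  have "\<forall>I::'a set. interior_ideal I \<longrightarrow> I \<cdot>\<^sub>s I = I"
    using regular_interior_ideal_idempotent[OF assms] by blast
  moreover have "\<forall>I1 I2::'a set. interior_ideal I1 \<longrightarrow> interior_ideal I2 \<longrightarrow>
      I1 \<inter> I2 = (I1 \<cdot>\<^sub>s I2) \<inter> (I2 \<cdot>\<^sub>s I1)"
    using regular_setmult_interior_ideals[OF assms] by blast
  moreover have "\<forall>I::'a set. interior_ideal I \<longrightarrow> semiprime_ii I"
    using regular_semiprime_ii[OF assms] by blast
  moreover have "\<forall>I::'a set. interior_ideal I \<longrightarrow> I \<noteq> UNIV \<longrightarrow>
      I = \<Inter>{J. irreducible_ii J \<and> semiprime_ii J \<and> I \<subseteq> J}"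
    using regular_interior_ideal_eq_Inter_irreducible_semiprime[OF assms] by blast
  ultimately show ?thesis by blast
qed

end
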